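(* Let $\gamma:I\to\mathcal S$ be a Legendrian curve whose stress density vanishes identically, and let $t_*\in I$ with $a(t_* )=0$. Then $a^{(n)}(t_* )=0$ for every $n\ge0$.
   Context: Let $\mathbb C^{2,1}$ denote $\mathbb C^3$ with the pseudo-Hermitian form $\langle z,w\rangle=i(\bar z^1w^3-\bar z^3w^1)+\bar z^2w^2$ (conjugate-linear in the first slot); $\mathcal S=\{[z]\in\mathbb{CP}^2:\langle z,z\rangle=0\}$ with contact distribution $\ker\zeta$, $\zeta=-\frac{i}{\bar z^tz}\langle z,dz\rangle|_{T\mathcal S}$. A Legendrian curve is a smooth immersion $\gamma:I\to\mathcal S$ tangent to the contact distribution. A normalized lift is a smooth $\Gamma:I\to\mathbb C^3\setminus\{0\}$ with $\gamma=[\Gamma]$ and $\det(\Gamma,\Gamma',\Gamma'')=i$. The Fubini densities are $a=\mathrm{Im}\langle\Gamma''',\Gamma''\rangle$, $b=\frac12\langle\Gamma'',\Gamma''\rangle$ (independent of the normalized lift). The stress density is $$\begin{aligned}\mathtt t=&\tfrac{4400}{81}aa'^3a''+a^2\big(-\tfrac{400}{27}ba'^3-\tfrac{200}{9}a'a''^2-\tfrac{400}{27}a'^2a'''\big)+a^3\big(\tfrac{25}{3}a'^2b'+\tfrac{50}{3}ba'a''+\tfrac{50}{9}a''a'''+\tfrac{25}{9}a'a^{(4)}\big)\\&+a^4\big(-\tfrac{16}{3}b^2a'-5b'a''-3a'b''-\tfrac{10}{3}ba'''-\tfrac13a^{(5)}\big)+a^5\big(8bb'+b'''\big)-\tfrac{6160}{243}a'^5.\end{aligned}$$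 *)

theory Defs
  imports "HOL-Analysis.Analysis"
begin

text \<open>The pseudo-Hermitian form of signature (2,1) on C^3, conjugate-linear in the first slot:
  <z,w> = i (conj z1 w3 - conj z3 w1) + conj z2 w2.\<close>
definition herm21 :: "complex^3 \<Rightarrow> complex^3 \<Rightarrow> complex" where
  "herm21 z w = \<i> * (cnj (z$1) * w$3 - cnj (z$3) * w$1) + cnj (z$2) * w$2"

definition vd :: "(real \<Rightarrow> 'a::real_normed_vector) \<Rightarrow> real \<Rightarrow> 'a" where
  "vd f = (\<lambda>t. vector_derivative f (at t))"

definition smooth_curve_on :: "real set \<Rightarrow> (real \<Rightarrow> 'a::real_normed_vector) \<Rightarrow> bool" where
  "smooth_curve_on I f \<longleftrightarrow>
     (\<forall>n. \<forall>t\<in>I. ((vd ^^ n) f has_vector_derivative (vd ^^ Suc n) f t) (at t))"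

text \<open>Gamma is a smooth lift (into C^3 minus 0) of a Legendrian curve in the null cone S:
  <Gamma,Gamma> = 0 and the curve is tangent to the contact distribution, i.e. <Gamma,Gamma'> = 0.\<close>
definition legendrian_lift :: "real set \<Rightarrow> (real \<Rightarrow> complex^3) \<Rightarrow> bool" where
  "legendrian_lift I \<Gamma> \<longleftrightarrow> smooth_curve_on I \<Gamma> \<and>
     (\<forall>t\<in>I. \<Gamma> t \<noteq> 0 \<and> herm21 (\<Gamma> t) (\<Gamma> t) = 0 \<and> herm21 (\<Gamma> t) (vd \<Gamma> t) = 0)"

definition normalized_lift :: "real set \<Rightarrow> (real \<Rightarrow> complex^3) \<Rightarrow> bool" where
  "normalized_lift I \<Gamma> \<longleftrightarrow> legendrian_lift I \<Gamma> \<and>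
     (\<forall>t\<in>I. det (transpose (vector [\<Gamma> t, vd \<Gamma> t, (vd ^^ 2) \<Gamma> t] :: complex^3^3)) = \<i>)"

definition fubini_a :: "(real \<Rightarrow> complex^3) \<Rightarrow> real \<Rightarrow> real" where
  "fubini_a \<Gamma> t = Im (herm21 ((vd ^^ 3) \<Gamma> t) ((vd ^^ 2) \<Gamma> t))"

definition fubini_b :: "(real \<Rightarrow> complex^3) \<Rightarrow> real \<Rightarrow> real" where
  "fubini_b \<Gamma> t = Re (herm21 ((vd ^^ 2) \<Gamma> t) ((vd ^^ 2) \<Gamma> t)) / 2"

definition stress :: "(real \<Rightarrow> real) \<Rightarrow> (real \<Rightarrow> real) \<Rightarrow> real \<Rightarrow> real" where
  "stress a b t = (let
      a0 = a t; a1 = deriv a t; a2 = (deriv ^^ 2) a t; a3 = (deriv ^^ 3) a t;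
      a4 = (deriv ^^ 4) a t; a5 = (deriv ^^ 5) a t;
      b0 = b t; b1 = deriv b t; b2 = (deriv ^^ 2) b t; b3 = (deriv ^^ 3) b t in
      4400/81 * a0 * a1^3 * a2
    + a0^2 * (- 400/27 * b0 * a1^3 - 200/9 * a1 * a2^2 - 400/27 * a1^2 * a3)
    + a0^3 * (25/3 * a1^2 * b1 + 50/3 * b0 * a1 * a2 + 50/9 * a2 * a3 + 25/9 * a1 * a4)
    + a0^4 * (- 16/3 * b0^2 * a1 - 5 * b1 * a2 - 3 * a1 * b2 - 10/3 * b0 * a3 - 1/3 * a5)
    + a0^5 * (8 * b0 * b1 + b3)
    - 6160/243 * a1^5)"

end

theory Submission
  imports Defs
begin

(*
  If the Fubini density a vanished at t0 to a finite order m > 0, Taylor's theorem would give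
  a^(j)(x) ~ c m (m-1) ... (m-j+1) (x - t0)^(m-j) with c <> 0 as x -> t0.  The stress density is
  weighted homogeneous, so dividing the identity stress = 0 by (x - t0)^(5m-5) and letting x -> t0
  kills every term involving b and leaves -c^5 m (8 + 100/9 m + 140/27 m^2 + 80/81 m^3 + 16/243 m^4) = 0,
  which is impossible.  Smoothness of a and b comes from that of the lift: both are real parts of
  linear combinations of the functions <Gamma^(p), Gamma^(q)>, a class closed under differentiation.
*)

definition smooth_real_on :: "real set \<Rightarrow> (real \<Rightarrow> real) \<Rightarrow> bool" where
  "smooth_real_on I f \<longleftrightarrow>
     (\<forall>n. \<forall>t\<in>I. ((deriv ^^ n) f has_real_derivative (deriv ^^ Suc n) f t) (at t))"

lemma smooth_real_on_isCont:
  "smooth_real_on I f \<Longrightarrow> t \<in> I \<Longrightarrow> isCont ((deriv ^^ n) f) t"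
  unfolding smooth_real_on_def by (blast intro: DERIV_isCont)

lemma smooth_real_on_if_derivative_closed:
  assumes "open I"
    and closed: "\<And>g. g \<in> S \<Longrightarrow> \<exists>g'\<in>S. \<forall>t\<in>I. (g has_real_derivative g' t) (at t)"
    and "f \<in> S"
  shows "smooth_real_on I f"
proof -
  have step: "\<exists>g'\<in>S. \<forall>t\<in>I. ((deriv ^^ n) f has_real_derivative g' t) (at t)"
    if "g \<in> S" and g: "\<forall>t\<in>I. (deriv ^^ n) f t = g t" for n g
  proof -
    obtain g' where "g' \<in> S" and g': "\<forall>t\<in>I. (g has_real_derivative g' t) (at t)"
      using closed \<open>g \<in> S\<close> by blast
    have "((deriv ^^ n) f has_real_derivative g' t) (at t)" if "t \<in> I" for t
      using has_field_derivative_transform_within_open[OF g'[rule_format, OF that] \<open>open I\<close> that] g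
      by simp
    then show ?thesis using \<open>g' \<in> S\<close> by blast
  qed
  have represented: "\<exists>g\<in>S. \<forall>t\<in>I. (deriv ^^ n) f t = g t" for n
  proof (induction n)
    case 0
    then show ?case using \<open>f \<in> S\<close> by auto
  next
    case (Suc n)
    then show ?case using step by (fastforce simp: DERIV_imp_deriv)
  qed
  show ?thesis
    unfolding smooth_real_on_def
  proof (intro allI ballI)
    fix n t assume "t \<in> I"
    obtain g' where "((deriv ^^ n) f has_real_derivative g' t) (at t)"
      using represented step \<open>t \<in> I\<close> by meson
    then show "((deriv ^^ n) f has_real_derivative (deriv ^^ Suc n) f t) (at t)"
      by (simp add: DERIV_imp_deriv)
  qed
qed

lemma has_vector_derivative_herm21:
  assumes f: "(f has_vector_derivative f') (at t)" and g: "(g has_vector_derivative g') (at t)"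
  shows "((\<lambda>t. herm21 (f t) (g t)) has_vector_derivative herm21 f' (g t) + herm21 (f t) g') (at t)"
proof -
  have component: "((\<lambda>t. h t $ i) has_vector_derivative h' $ i) (at t)"
    if "(h has_vector_derivative h') (at t)" for h h' and i :: 3
    using bounded_linear.has_vector_derivative[OF bounded_linear_vec_nth that] .
  have "((\<lambda>t. \<i> * (cnj (f t $ 1) * g t $ 3 - cnj (f t $ 3) * g t $ 1) + cnj (f t $ 2) * g t $ 2)
     has_vector_derivative
      \<i> * ((cnj (f t $ 1) * g' $ 3 + cnj (f' $ 1) * g t $ 3) - (cnj (f t $ 3) * g' $ 1 + cnj (f' $ 3) * g t $ 1))
      + (cnj (f t $ 2) * g' $ 2 + cnj (f' $ 2) * g t $ 2)) (at t)"
    by (intro derivative_intros has_vector_derivative_cnj component f g)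
  then show ?thesis
    unfolding herm21_def by (simp add: algebra_simps)
qed

inductive_set herm_span :: "(real \<Rightarrow> complex^3) \<Rightarrow> (real \<Rightarrow> complex) set" for \<Gamma> where
  herm_span_pair: "(\<lambda>t. herm21 ((vd ^^ p) \<Gamma> t) ((vd ^^ q) \<Gamma> t)) \<in> herm_span \<Gamma>"
| herm_span_add: "f \<in> herm_span \<Gamma> \<Longrightarrow> g \<in> herm_span \<Gamma> \<Longrightarrow> (\<lambda>t. f t + g t) \<in> herm_span \<Gamma>"
| herm_span_scale: "f \<in> herm_span \<Gamma> \<Longrightarrow> (\<lambda>t. c * f t) \<in> herm_span \<Gamma>"

lemma herm_span_derivative_closed:
  assumes smooth: "smooth_curve_on I \<Gamma>" and "f \<in> herm_span \<Gamma>"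
  shows "\<exists>f'\<in>herm_span \<Gamma>. \<forall>t\<in>I. (f has_vector_derivative f' t) (at t)"
  using \<open>f \<in> herm_span \<Gamma>\<close>
proof induction
  case (herm_span_pair p q)
  have "((vd ^^ n) \<Gamma> has_vector_derivative (vd ^^ Suc n) \<Gamma> t) (at t)" if "t \<in> I" for n t
    using smooth that unfolding smooth_curve_on_def by blast
  then have "\<forall>t\<in>I. ((\<lambda>t. herm21 ((vd ^^ p) \<Gamma> t) ((vd ^^ q) \<Gamma> t)) has_vector_derivative
      herm21 ((vd ^^ Suc p) \<Gamma> t) ((vd ^^ q) \<Gamma> t) + herm21 ((vd ^^ p) \<Gamma> t) ((vd ^^ Suc q) \<Gamma> t)) (at t)"
    by (blast intro: has_vector_derivative_herm21)
  then show ?case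
    by (rule bexI[of _ "\<lambda>t. herm21 ((vd ^^ Suc p) \<Gamma> t) ((vd ^^ q) \<Gamma> t)
                          + herm21 ((vd ^^ p) \<Gamma> t) ((vd ^^ Suc q) \<Gamma> t)"])
       (intro herm_span.herm_span_add herm_span.herm_span_pair)
next
  case (herm_span_add f g)
  then obtain f' g' where "f' \<in> herm_span \<Gamma>" "\<forall>t\<in>I. (f has_vector_derivative f' t) (at t)"
    and "g' \<in> herm_span \<Gamma>" "\<forall>t\<in>I. (g has_vector_derivative g' t) (at t)"
    by blast
  then show ?case
    by (intro bexI[of _ "\<lambda>t. f' t + g' t"] ballI has_vector_derivative_add herm_span.herm_span_add) auto
next
  case (herm_span_scale f c)
  then obtain f' where "f' \<in> herm_span \<Gamma>" "\<forall>t\<in>I. (f has_vector_derivative f' t) (at t)"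
    by blast
  then show ?case
    by (intro bexI[of _ "\<lambda>t. c * f' t"] ballI has_vector_derivative_mult_right herm_span.herm_span_scale) auto
qed

lemma smooth_real_on_Re_herm_span:
  assumes "open I" and "smooth_curve_on I \<Gamma>" and "f \<in> herm_span \<Gamma>"
  shows "smooth_real_on I (\<lambda>t. Re (f t))"
proof (rule smooth_real_on_if_derivative_closed[OF \<open>open I\<close>])
  show "(\<lambda>t. Re (f t)) \<in> (\<lambda>g t. Re (g t)) ` herm_span \<Gamma>"
    using \<open>f \<in> herm_span \<Gamma>\<close> by blast
next
  fix h assume "h \<in> (\<lambda>g t. Re (g t)) ` herm_span \<Gamma>"
  then obtain g where "g \<in> herm_span \<Gamma>" and h: "h = (\<lambda>t. Re (g t))" by blast
  then obtain g' where "g' \<in> herm_span \<Gamma>" and "\<forall>t\<in>I. (g has_vector_derivative g' t) (at t)"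
    using herm_span_derivative_closed[OF assms(2)] by blast
  then show "\<exists>h'\<in>(\<lambda>g t. Re (g t)) ` herm_span \<Gamma>. \<forall>t\<in>I. (h has_real_derivative h' t) (at t)"
    unfolding h by (intro bexI[of _ "\<lambda>t. Re (g' t)"]) (auto intro: has_field_derivative_Re)
qed

lemma smooth_real_on_fubini_a:
  assumes "open I" and "smooth_curve_on I \<Gamma>"
  shows "smooth_real_on I (fubini_a \<Gamma>)"
proof -
  have "fubini_a \<Gamma> = (\<lambda>t. Re (- \<i> * herm21 ((vd ^^ 3) \<Gamma> t) ((vd ^^ 2) \<Gamma> t)))"
    by (simp add: fubini_a_def fun_eq_iff)
  then show ?thesis
    by (simp only:) (intro smooth_real_on_Re_herm_span[OF assms] herm_span.intros)
qed

lemma smooth_real_on_fubini_b: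
  assumes "open I" and "smooth_curve_on I \<Gamma>"
  shows "smooth_real_on I (fubini_b \<Gamma>)"
proof -
  have "fubini_b \<Gamma> = (\<lambda>t. Re (1/2 * herm21 ((vd ^^ 2) \<Gamma> t) ((vd ^^ 2) \<Gamma> t)))"
    by (simp add: fubini_b_def fun_eq_iff)
  then show ?thesis
    by (simp only:) (intro smooth_real_on_Re_herm_span[OF assms] herm_span.intros)
qed

lemma taylor_vanishing_derivatives:
  fixes f :: "real \<Rightarrow> real"
  assumes "smooth_real_on I f" and segment: "{min x t0..max x t0} \<subseteq> I"
    and vanish: "\<forall>k<m. (deriv ^^ k) f t0 = 0" and "j \<le> m" and "x \<noteq> t0"
  shows "\<exists>\<xi>. \<xi> \<noteq> t0 \<and> \<bar>\<xi> - t0\<bar> \<le> \<bar>x - t0\<bar> \<and>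
           (deriv ^^ j) f x = (deriv ^^ m) f \<xi> / fact (m - j) * (x - t0) ^ (m - j)"
proof (cases "j = m")
  case True
  then show ?thesis using \<open>x \<noteq> t0\<close> by auto
next
  case False
  then have "0 < m - j" using \<open>j \<le> m\<close> by simp
  moreover have "\<forall>k t. k < m - j \<and> min x t0 \<le> t \<and> t \<le> max x t0 \<longrightarrow>
      ((deriv ^^ (j + k)) f has_real_derivative (deriv ^^ (j + Suc k)) f t) (at t)"
    using assms(1) segment unfolding smooth_real_on_def by auto
  ultimately obtain \<xi> where \<xi>: "if x < t0 then x < \<xi> \<and> \<xi> < t0 else t0 < \<xi> \<and> \<xi> < x"
    and taylor: "(deriv ^^ j) f x = (\<Sum>k<m - j. (deriv ^^ (j + k)) f t0 / fact k * (x - t0) ^ k)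
                   + (deriv ^^ (j + (m - j))) f \<xi> / fact (m - j) * (x - t0) ^ (m - j)"
    using Taylor[where diff = "\<lambda>k. (deriv ^^ (j + k)) f" and a = "min x t0" and b = "max x t0"
        and c = t0 and x = x and n = "m - j" and f = "(deriv ^^ j) f"] \<open>x \<noteq> t0\<close>
    by fastforce
  have "(\<Sum>k<m - j. (deriv ^^ (j + k)) f t0 / fact k * (x - t0) ^ k) = 0"
    using vanish by (intro sum.neutral) auto
  then show ?thesis
    using taylor \<xi> \<open>j \<le> m\<close> by (intro exI[of _ \<xi>]) (auto split: if_splits)
qed

lemma tendsto_at_via_nearer_points:
  fixes f g :: "real \<Rightarrow> real"
  assumes lim: "(f \<longlongrightarrow> L) (at t0)"
    and nearer: "\<forall>\<^sub>F x in at t0. \<exists>\<xi>. \<xi> \<noteq> t0 \<and> \<bar>\<xi> - t0\<bar> \<le> \<bar>x - t0\<bar> \<and> g x = f \<xi>"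
  shows "(g \<longlongrightarrow> L) (at t0)"
proof (rule tendstoI)
  fix e :: real assume "e > 0"
  with lim obtain d where "d > 0" and d: "\<And>\<xi>. \<xi> \<noteq> t0 \<Longrightarrow> dist \<xi> t0 < d \<Longrightarrow> dist (f \<xi>) L < e"
    unfolding tendsto_iff eventually_at by blast
  have "\<forall>\<^sub>F x in at t0. dist x t0 < d"
    using \<open>d > 0\<close> eventually_at by blast
  with nearer show "\<forall>\<^sub>F x in at t0. dist (g x) L < e"
    by eventually_elim (metis d dist_real_def order.strict_trans1)
qed

lemma prod_falling_eq_fact_div:
  assumes "j \<le> m"
  shows "(\<Prod>i<j. real m - real i) = fact m / fact (m - j)"
proof -
  have "(\<Prod>i<j. real m - real i) = fact j * (real m gchoose j)"
    by (simp add: gbinomial_mult_fact atLeast0LessThan)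
  also have "\<dots> = fact m / fact (m - j)"
    using assms by (simp add: binomial_gbinomial[symmetric] fact_binomial)
  finally show ?thesis .
qed

lemma tendsto_scaled_derivative:
  fixes f :: "real \<Rightarrow> real"
  assumes "open I" and "t0 \<in> I" and smooth: "smooth_real_on I f"
    and vanish: "\<forall>k<m. (deriv ^^ k) f t0 = 0"
  shows "((\<lambda>x. (deriv ^^ j) f x * (x - t0) ^ j / (x - t0) ^ m)
           \<longlongrightarrow> (deriv ^^ m) f t0 / fact m * (\<Prod>i<j. real m - real i)) (at t0)"
proof (cases "j \<le> m")
  case True
  obtain e where "e > 0" and ball: "ball t0 e \<subseteq> I"
    using assms(1,2) open_contains_ball by blast
  have "\<exists>\<xi>. \<xi> \<noteq> t0 \<and> \<bar>\<xi> - t0\<bar> \<le> \<bar>x - t0\<bar> \<and>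
          (deriv ^^ j) f x * (x - t0) ^ j / (x - t0) ^ m = (deriv ^^ m) f \<xi> / fact (m - j)"
    if "x \<noteq> t0" and "dist x t0 < e" for x
  proof -
    have "{min x t0..max x t0} \<subseteq> ball t0 e"
      using that by (auto simp: dist_real_def)
    then have "{min x t0..max x t0} \<subseteq> I"
      using ball by blast
    then obtain \<xi> where \<xi>: "\<xi> \<noteq> t0" "\<bar>\<xi> - t0\<bar> \<le> \<bar>x - t0\<bar>"
      and taylor: "(deriv ^^ j) f x = (deriv ^^ m) f \<xi> / fact (m - j) * (x - t0) ^ (m - j)"
      using taylor_vanishing_derivatives[OF smooth _ vanish True \<open>x \<noteq> t0\<close>] by blast
    have "(x - t0) ^ (m - j) * (x - t0) ^ j = (x - t0) ^ m"
      using True by (simp flip: power_add)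
    then have "(deriv ^^ j) f x * (x - t0) ^ j / (x - t0) ^ m = (deriv ^^ m) f \<xi> / fact (m - j)"
      using \<open>x \<noteq> t0\<close> unfolding taylor by (simp add: field_simps)
    with \<xi> show ?thesis by blast
  qed
  then have "\<forall>\<^sub>F x in at t0. \<exists>\<xi>. \<xi> \<noteq> t0 \<and> \<bar>\<xi> - t0\<bar> \<le> \<bar>x - t0\<bar> \<and>
               (deriv ^^ j) f x * (x - t0) ^ j / (x - t0) ^ m = (deriv ^^ m) f \<xi> / fact (m - j)"
    using \<open>e > 0\<close> eventually_at by blast
  moreover have "((\<lambda>\<xi>. (deriv ^^ m) f \<xi> / fact (m - j)) \<longlongrightarrow> (deriv ^^ m) f t0 / fact (m - j)) (at t0)"
    using smooth_real_on_isCont[OF smooth \<open>t0 \<in> I\<close>] by (intro tendsto_intros) (simp_all add: isCont_def)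
  ultimately show ?thesis
    using prod_falling_eq_fact_div[OF True] by (simp add: tendsto_at_via_nearer_points)
next
  case False
  then have falling: "(\<Prod>i<j. real m - real i) = 0"
    by (intro prod_zero) auto
  have "((\<lambda>x. (deriv ^^ j) f x * (x - t0) ^ (j - m)) \<longlongrightarrow> (deriv ^^ j) f t0 * (t0 - t0) ^ (j - m)) (at t0)"
    using smooth_real_on_isCont[OF smooth \<open>t0 \<in> I\<close>] by (intro tendsto_intros) (simp add: isCont_def)
  then have "((\<lambda>x. (deriv ^^ j) f x * (x - t0) ^ (j - m)) \<longlongrightarrow> 0) (at t0)"
    using False by (simp add: power_0_left)
  moreover have "\<forall>\<^sub>F x in at t0. (deriv ^^ j) f x * (x - t0) ^ (j - m) = (deriv ^^ j) f x * (x - t0) ^ j / (x - t0) ^ m"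
    using False by (auto simp: eventually_at_filter power_diff)
  ultimately show ?thesis
    unfolding falling by (simp add: Lim_transform_eventually)
qed

definition stress_poly ::
    "real \<Rightarrow> real \<Rightarrow> real \<Rightarrow> real \<Rightarrow> real \<Rightarrow> real \<Rightarrow> real \<Rightarrow> real \<Rightarrow> real \<Rightarrow> real \<Rightarrow> real" where
  "stress_poly a0 a1 a2 a3 a4 a5 b0 b1 b2 b3 =
      4400/81 * a0 * a1^3 * a2
    + a0^2 * (- 400/27 * b0 * a1^3 - 200/9 * a1 * a2^2 - 400/27 * a1^2 * a3)
    + a0^3 * (25/3 * a1^2 * b1 + 50/3 * b0 * a1 * a2 + 50/9 * a2 * a3 + 25/9 * a1 * a4)
    + a0^4 * (- 16/3 * b0^2 * a1 - 5 * b1 * a2 - 3 * a1 * b2 - 10/3 * b0 * a3 - 1/3 * a5)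
    + a0^5 * (8 * b0 * b1 + b3)
    - 6160/243 * a1^5"

(* Weighted homogeneity: with a^(k) of weight -k and b^(k) of weight -(k+2), every monomial of
   the stress density has weight -5 and degree 5 in a. *)
lemma stress_poly_scale:
  fixes s S :: real
  assumes "s \<noteq> 0"
  shows "stress_poly (S * u0) (S * u1 / s) (S * u2 / s^2) (S * u3 / s^3) (S * u4 / s^4) (S * u5 / s^5)
           (v0 / s^2) (v1 / s^3) (v2 / s^4) (v3 / s^5)
       = S^5 / s^5 * stress_poly u0 u1 u2 u3 u4 u5 v0 v1 v2 v3"
  using assms unfolding stress_poly_def
  by (simp add: field_simps power2_eq_square power3_eq_cube)
     (simp add: algebra_simps power2_eq_square power3_eq_cube power_numeral_reduce)

lemma stress_poly_falling_factorial:
  fixes c m :: real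
  defines "F \<equiv> \<lambda>j. c * (\<Prod>i<j. m - real i)"
  shows "stress_poly (F 0) (F 1) (F 2) (F 3) (F 4) (F 5) 0 0 0 0
    = -(c^5 * m * (8 + 100/9*m + 140/27*m^2 + 80/81*m^3 + 16/243*m^4))"
  unfolding stress_poly_def F_def
  by (simp add: prod.lessThan_Suc eval_nat_numeral field_simps power_numeral_reduce)

lemma stress_eq_stress_poly:
  "stress a b t = stress_poly ((deriv ^^ 0) a t) ((deriv ^^ 1) a t) ((deriv ^^ 2) a t) ((deriv ^^ 3) a t)
     ((deriv ^^ 4) a t) ((deriv ^^ 5) a t) ((deriv ^^ 0) b t) ((deriv ^^ 1) b t) ((deriv ^^ 2) b t)
     ((deriv ^^ 3) b t)"
  by (simp add: stress_def stress_poly_def Let_def)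

lemma stress_rescaled:
  fixes a b :: "real \<Rightarrow> real" and t0 x :: real and m :: nat
  defines "u \<equiv> \<lambda>j x. (deriv ^^ j) a x * (x - t0) ^ j / (x - t0) ^ m"
    and "v \<equiv> \<lambda>j x. (x - t0) ^ (2 + j) * (deriv ^^ j) b x"
  assumes "x \<noteq> t0"
  shows "stress a b x = ((x - t0) ^ m) ^ 5 / (x - t0) ^ 5 *
           stress_poly (u 0 x) (u 1 x) (u 2 x) (u 3 x) (u 4 x) (u 5 x) (v 0 x) (v 1 x) (v 2 x) (v 3 x)"
proof -
  have "x - t0 \<noteq> 0"
    using assms by simp
  have a_scaled: "(deriv ^^ j) a x = (x - t0) ^ m * u j x / (x - t0) ^ j" for j
    using \<open>x - t0 \<noteq> 0\<close> by (simp add: u_def)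
  have b_scaled: "(deriv ^^ j) b x = v j x / (x - t0) ^ (2 + j)" for j
    using \<open>x - t0 \<noteq> 0\<close> by (simp add: v_def)
  have "stress a b x = stress_poly ((x - t0) ^ m * u 0 x) ((x - t0) ^ m * u 1 x / (x - t0))
      ((x - t0) ^ m * u 2 x / (x - t0) ^ 2) ((x - t0) ^ m * u 3 x / (x - t0) ^ 3)
      ((x - t0) ^ m * u 4 x / (x - t0) ^ 4) ((x - t0) ^ m * u 5 x / (x - t0) ^ 5)
      (v 0 x / (x - t0) ^ 2) (v 1 x / (x - t0) ^ 3) (v 2 x / (x - t0) ^ 4) (v 3 x / (x - t0) ^ 5)"
    unfolding stress_eq_stress_poly a_scaled b_scaled
    by (simp only: power_0 power_one_right div_by_1 add_0_right numeral_plus_one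
        numeral_plus_numeral add_num_simps)
  also have "\<dots> = ((x - t0) ^ m) ^ 5 / (x - t0) ^ 5 *
      stress_poly (u 0 x) (u 1 x) (u 2 x) (u 3 x) (u 4 x) (u 5 x) (v 0 x) (v 1 x) (v 2 x) (v 3 x)"
    by (rule stress_poly_scale[OF \<open>x - t0 \<noteq> 0\<close>])
  finally show ?thesis .
qed

lemma deriv_vanish_at_zero_of_stress_free:
  fixes a b :: "real \<Rightarrow> real"
  assumes "open I" and "t0 \<in> I" and smooth_a: "smooth_real_on I a" and smooth_b: "smooth_real_on I b"
    and stress_free: "\<forall>t\<in>I. stress a b t = 0" and "a t0 = 0"
  shows "(deriv ^^ n) a t0 = 0"
proof (rule ccontr)
  assume "(deriv ^^ n) a t0 \<noteq> 0"
  define m where "m = (LEAST k. (deriv ^^ k) a t0 \<noteq> 0)"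
  have "(deriv ^^ m) a t0 \<noteq> 0"
    unfolding m_def by (rule LeastI) fact
  moreover have vanish: "\<forall>k<m. (deriv ^^ k) a t0 = 0"
    unfolding m_def using not_less_Least by blast
  ultimately have "m > 0"
    using \<open>a t0 = 0\<close> by (cases m) auto
  define c where "c = (deriv ^^ m) a t0 / fact m"
  have "c \<noteq> 0"
    using \<open>(deriv ^^ m) a t0 \<noteq> 0\<close> by (simp add: c_def)
  define u where "u j x = (deriv ^^ j) a x * (x - t0) ^ j / (x - t0) ^ m" for j x
  define v where "v j x = (x - t0) ^ (2 + j) * (deriv ^^ j) b x" for j x
  define L where "L j = c * (\<Prod>i<j. real m - real i)" for j
  have "(u j \<longlongrightarrow> L j) (at t0)" for j
    unfolding u_def L_def c_def using tendsto_scaled_derivative[OF assms(1,2) smooth_a vanish] by simp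
  moreover have "(v j \<longlongrightarrow> 0) (at t0)" for j
  proof -
    have "(v j \<longlongrightarrow> (t0 - t0) ^ (2 + j) * (deriv ^^ j) b t0) (at t0)"
      unfolding v_def using smooth_real_on_isCont[OF smooth_b \<open>t0 \<in> I\<close>]
      by (intro tendsto_intros) (simp add: isCont_def)
    then show ?thesis by simp
  qed
  ultimately have limit: "((\<lambda>x. stress_poly (u 0 x) (u 1 x) (u 2 x) (u 3 x) (u 4 x) (u 5 x)
                                      (v 0 x) (v 1 x) (v 2 x) (v 3 x))
      \<longlongrightarrow> stress_poly (L 0) (L 1) (L 2) (L 3) (L 4) (L 5) 0 0 0 0) (at t0)"
    unfolding stress_poly_def by (intro tendsto_intros)
  have vanishing: "\<forall>\<^sub>F x in at t0.
      stress_poly (u 0 x) (u 1 x) (u 2 x) (u 3 x) (u 4 x) (u 5 x) (v 0 x) (v 1 x) (v 2 x) (v 3 x) = 0"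
    using eventually_at_in_open[OF \<open>open I\<close> \<open>t0 \<in> I\<close>]
  proof eventually_elim
    case (elim x)
    then have "x - t0 \<noteq> 0" by simp
    have "stress a b x = ((x - t0) ^ m) ^ 5 / (x - t0) ^ 5 *
        stress_poly (u 0 x) (u 1 x) (u 2 x) (u 3 x) (u 4 x) (u 5 x) (v 0 x) (v 1 x) (v 2 x) (v 3 x)"
      unfolding u_def v_def using elim by (intro stress_rescaled) simp
    then show ?case
      using stress_free elim \<open>x - t0 \<noteq> 0\<close> by simp
  qed
  have "stress_poly (L 0) (L 1) (L 2) (L 3) (L 4) (L 5) 0 0 0 0 = 0"
    using tendsto_unique[OF trivial_limit_at limit tendsto_eventually[OF vanishing]] .
  moreover have "stress_poly (L 0) (L 1) (L 2) (L 3) (L 4) (L 5) 0 0 0 0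
      = -(c^5 * real m * (8 + 100/9 * real m + 140/27 * real m^2 + 80/81 * real m^3 + 16/243 * real m^4))"
    unfolding L_def by (rule stress_poly_falling_factorial)
  moreover have "8 + 100/9 * real m + 140/27 * real m^2 + 80/81 * real m^3 + 16/243 * real m^4 > 0"
    by (simp add: add_pos_nonneg)
  ultimately show False
    using \<open>c \<noteq> 0\<close> \<open>m > 0\<close> by simp
qed

theorem mainTheorem5:
  fixes I :: "real set" and \<Gamma> :: "real \<Rightarrow> complex^3" and t0 :: real
  assumes "open I" and "is_interval I"
    and "normalized_lift I \<Gamma>"
    and "\<forall>t\<in>I. stress (fubini_a \<Gamma>) (fubini_b \<Gamma>) t = 0"
    and "t0 \<in> I" and "fubini_a \<Gamma> t0 = 0"
  shows "\<forall>n. (deriv ^^ n) (fubini_a \<Gamma>) t0 = 0"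
proof
  fix n
  have "smooth_curve_on I \<Gamma>"
    using assms(3) unfolding normalized_lift_def legendrian_lift_def by blast
  then show "(deriv ^^ n) (fubini_a \<Gamma>) t0 = 0"
    using deriv_vanish_at_zero_of_stress_free[OF assms(1,5) _ _ assms(4,6)]
      smooth_real_on_fubini_a[OF assms(1)] smooth_real_on_fubini_b[OF assms(1)] by blast
qed

end
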